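(* Assume $N\ge2$, $p>1$ and $M>-\mu^*(1)$. Then for real numbers $0<a<b$ there exists no positive solution $u$ of (E) on $(a,b)$ such that $u(r)\to\infty$ as $r\to a$.
   Context: (E) denotes the ODE $-u_{rr}-\frac{N-1}{r}u_r=|u|^{p-1}u+M|u_r|^{\frac{2p}{p+1}}$ for $r>0$. $\mu^*(1)=(p+1)\left(\frac{p+1}{2p}\right)^{\frac{p}{p+1}}$. *)

theory Defs
  imports "HOL-Analysis.Analysis"
begin

definition mu_star1 :: "real \<Rightarrow> real" where
  "mu_star1 p = (p + 1) * ((p + 1) / (2 * p)) powr (p / (p + 1))"

definition solves_E_on :: "nat \<Rightarrow> real \<Rightarrow> real \<Rightarrow> (real \<Rightarrow> real) \<Rightarrow> real \<Rightarrow> real \<Rightarrow> bool" where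
  "solves_E_on N p M u a b \<longleftrightarrow>
     (\<exists>u' u''. \<forall>r\<in>{a<..<b}.
        (u has_real_derivative u' r) (at r) \<and>
        (u' has_real_derivative u'' r) (at r) \<and>
        - u'' r - (real N - 1) / r * u' r
          = \<bar>u r\<bar> powr (p - 1) * u r + M * \<bar>u' r\<bar> powr (2 * p / (p + 1)))"

end

(* The substitution z = u' u^(-(p+1)/2) turns (E) into the Riccati-type equation
     z' = u^((p-1)/2) (-1 - M |z|^(2p/(p+1)) - (p+1)/2 z^2) - (N-1)/r z,
   whose nonlinear terms all carry the same factor u^((p-1)/2).  By Young's inequality, whose
   optimal constant is mu^*(1), the bracket is at most -delta (1 + (p+1)/2 z^2) as long as
   M > -mu^*(1).  Where u is large this yields z' <= -eta u^((p-1)/2), so z decreases; since u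
   blows up at a, z cannot be positive near a.  Then Phi = z^2 + 2 eta ln u has
   Phi' = 2 z (z' + eta u^((p-1)/2)) >= 0, so ln u stays bounded as r -> a, a contradiction. *)
theory Submission
  imports Defs "HOL-Real_Asymp.Multiseries_Expansion"
begin

text \<open>\<^term>\<open>mu_star1 p\<close> is the optimal constant in this instance of Young's inequality.\<close>
lemma mu_star1_Young:
  fixes p t :: real
  assumes "p > 1" "t \<ge> 0"
  shows "mu_star1 p * t powr (p / (p + 1)) \<le> 1 + (p + 1) / 2 * t"
proof (cases "t = 0")
  case True
  then show ?thesis using assms by simp
next
  case False
  define c where "c = (p + 1) / (2 * p)"
  define \<theta> where "\<theta> = p / (p + 1)"
  have "c > 0" using assms by (simp add: c_def)
  have "(c * t) powr \<theta> * 1 powr (1 / (p + 1)) \<le> \<theta> * (c * t) + 1 / (p + 1) * 1"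
    by (rule Youngs_inequality_0) (use assms \<open>c > 0\<close> False in \<open>auto simp: field_simps \<theta>_def\<close>)
  moreover have "\<theta> * (c * t) = t / 2" using assms by (simp add: \<theta>_def c_def)
  ultimately have "c powr \<theta> * t powr \<theta> \<le> t / 2 + 1 / (p + 1)"
    using assms \<open>c > 0\<close> by (simp add: powr_mult)
  then have "(p + 1) * (c powr \<theta> * t powr \<theta>) \<le> (p + 1) * (t / 2 + 1 / (p + 1))"
    using assms by (intro mult_left_mono) auto
  moreover have "(p + 1) * (t / 2 + 1 / (p + 1)) = 1 + (p + 1) / 2 * t"
    using assms by (simp add: field_simps)
  moreover have "mu_star1 p = (p + 1) * c powr \<theta>" by (simp add: mu_star1_def c_def \<theta>_def)
  ultimately show ?thesis by (simp add: \<theta>_def mult.assoc)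
qed

lemma power2_powr_eq_abs_powr:
  fixes z e :: real
  shows "(z^2) powr e = \<bar>z\<bar> powr (2 * e)"
proof -
  have "(z^2) powr e = (\<bar>z\<bar> powr 2) powr e"
    by (cases "z = 0") (simp_all add: powr_numeral)
  also have "\<dots> = \<bar>z\<bar> powr (2 * e)" by (rule powr_powr)
  finally show ?thesis .
qed

lemma gradient_term_absorbed:
  fixes p M :: real
  assumes "p > 1" "M > - mu_star1 p"
  obtains \<delta> where "\<delta> > 0"
    "\<And>z. \<delta> * (1 + (p + 1) / 2 * z^2) \<le> 1 + M * \<bar>z\<bar> powr (2 * p / (p + 1)) + (p + 1) / 2 * z^2"
proof
  define \<mu> where "\<mu> = mu_star1 p"
  define m where "m = max 0 (- M)"
  have "\<mu> > 0" using assms by (simp add: \<mu>_def mu_star1_def)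
  moreover have "m < \<mu>" "m \<ge> 0" using assms \<open>\<mu> > 0\<close> by (auto simp: m_def \<mu>_def)
  ultimately show "1 - m / \<mu> > 0" by simp
  fix z :: real
  let ?W = "1 + (p + 1) / 2 * z^2" and ?G = "\<bar>z\<bar> powr (2 * p / (p + 1))"
  have "\<mu> * ?G \<le> ?W"
    using mu_star1_Young[OF \<open>p > 1\<close>, of "z^2"] power2_powr_eq_abs_powr[of z "p / (p + 1)"]
    by (simp add: \<mu>_def)
  have "- M * ?G \<le> m * ?G"
    by (intro mult_right_mono) (auto simp: m_def)
  also have "\<dots> = m / \<mu> * (\<mu> * ?G)" using \<open>\<mu> > 0\<close> by simp
  also have "\<dots> \<le> m / \<mu> * ?W"
    using \<open>\<mu> * ?G \<le> ?W\<close> \<open>m \<ge> 0\<close> \<open>\<mu> > 0\<close> by (intro mult_left_mono) auto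
  finally show "(1 - m / \<mu>) * ?W \<le> 1 + M * ?G + (p + 1) / 2 * z^2"
    unfolding left_diff_distrib mult_minus_left mult_1 by linarith
qed

lemma riccati_rhs_le:
  fixes \<delta> \<beta> k C w g z :: real
  assumes "\<delta> > 0" "\<beta> \<ge> 1" "0 \<le> k" "k \<le> C" "2 * C / \<delta> \<le> w"
    and "g \<le> - \<delta> * (1 + \<beta> * z^2)"
  shows "w * g - k * z \<le> - (\<delta> / 2) * w"
proof -
  define W where "W = 1 + \<beta> * z^2"
  have "W \<ge> 1" using assms(2) by (simp add: W_def)
  have "0 \<le> (\<bar>z\<bar> - 1)^2" by simp
  then have "2 * \<bar>z\<bar> \<le> 1 + z^2" by (simp add: power2_diff power2_abs)
  then have "\<bar>z\<bar> \<le> 1 + z^2" by simp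
  also have "\<dots> \<le> W" using assms(2) mult_right_mono[of 1 \<beta> "z^2"] by (simp add: W_def)
  finally have "\<bar>z\<bar> \<le> W" .
  have "C \<le> \<delta> / 2 * w" using assms(1,5) by (simp add: field_simps)
  have "0 \<le> 2 * C / \<delta>" using assms(1,3,4) by simp
  then have "w \<ge> 0" using assms(5) by linarith
  have "w * g \<le> w * (- \<delta> * W)" using assms(6) \<open>w \<ge> 0\<close> by (intro mult_left_mono) (auto simp: W_def)
  moreover have "- k * z \<le> k * \<bar>z\<bar>" using assms(3)
    by (metis abs_ge_minus_self minus_mult_left minus_mult_right mult_left_mono)
  moreover have "k * \<bar>z\<bar> \<le> C * W"
    using \<open>\<bar>z\<bar> \<le> W\<close> assms(3,4) by (intro mult_mono) auto
  moreover have "C * W \<le> \<delta> / 2 * w * W"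
    using \<open>C \<le> \<delta> / 2 * w\<close> \<open>W \<ge> 1\<close> by (intro mult_right_mono) auto
  moreover have "\<delta> / 2 * w * 1 \<le> \<delta> / 2 * w * W"
    using \<open>W \<ge> 1\<close> \<open>w \<ge> 0\<close> \<open>\<delta> > 0\<close> by (intro mult_left_mono) auto
  ultimately show ?thesis by (simp add: algebra_simps)
qed

lemma E_riccati_rhs_le:
  fixes N :: nat and p M a :: real
  assumes "N \<ge> 1" "p > 1" "M > - mu_star1 p" "a > 0"
  obtains \<eta> K where "\<eta> > 0"
    "\<And>r w z. a < r \<Longrightarrow> K \<le> w \<Longrightarrow>
      w * (- 1 - M * \<bar>z\<bar> powr (2 * p / (p + 1)) - (p + 1) / 2 * z^2) - (real N - 1) / r * z
        \<le> - \<eta> * w"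
proof -
  obtain \<delta> where "\<delta> > 0" and absorbed: "\<And>z. \<delta> * (1 + (p + 1) / 2 * z^2)
      \<le> 1 + M * \<bar>z\<bar> powr (2 * p / (p + 1)) + (p + 1) / 2 * z^2"
    using gradient_term_absorbed[OF \<open>p > 1\<close> \<open>M > - mu_star1 p\<close>] by blast
  define C where "C = (real N - 1) / a"
  show ?thesis
  proof (rule that[of "\<delta> / 2" "2 * C / \<delta>"])
    show "\<delta> / 2 > 0" using \<open>\<delta> > 0\<close> by simp
    fix r w z :: real
    assume "a < r" "2 * C / \<delta> \<le> w"
    then show "w * (- 1 - M * \<bar>z\<bar> powr (2 * p / (p + 1)) - (p + 1) / 2 * z^2)
        - (real N - 1) / r * z \<le> - (\<delta> / 2) * w"
    proof (intro riccati_rhs_le[OF \<open>\<delta> > 0\<close>])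
      show "(real N - 1) / r \<le> C"
        using assms \<open>a < r\<close> by (simp add: C_def divide_left_mono)
      show "- 1 - M * \<bar>z\<bar> powr (2 * p / (p + 1)) - (p + 1) / 2 * z^2
          \<le> - \<delta> * (1 + (p + 1) / 2 * z^2)"
        unfolding mult_minus_left using absorbed[of z] by linarith
    qed (use assms \<open>a < r\<close> in auto)
  qed
qed

lemma DERIV_nonneg_imp_le:
  fixes f f' :: "real \<Rightarrow> real"
  assumes "s \<le> t"
    and "\<And>x. x \<in> {s..t} \<Longrightarrow> (f has_real_derivative f' x) (at x)"
    and "\<And>x. x \<in> {s<..<t} \<Longrightarrow> f' x \<ge> 0"
  shows "f s \<le> f t"
proof (rule DERIV_nonneg_imp_increasing_open[OF \<open>s \<le> t\<close>])
  show "\<exists>y. (f has_real_derivative y) (at x) \<and> y \<ge> 0" if "s < x" "x < t" for x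
    using assms(2,3) that by (intro exI[of _ "f' x"]) auto
  show "continuous_on {s..t} f"
    using assms(2) by (rule has_real_derivative_imp_continuous_on)
qed

lemma filterlim_at_top_at_right_obtain:
  fixes u :: "real \<Rightarrow> real"
  assumes "filterlim u at_top (at_right a)" "a < c"
  obtains s where "a < s" "s < c" "X < u s"
proof -
  have "eventually (\<lambda>x. X < u x) (at_right a)"
    using assms(1) filterlim_at_top_dense by blast
  then obtain b where "b > a" "\<And>y. a < y \<Longrightarrow> y < b \<Longrightarrow> X < u y"
    unfolding eventually_at_right_field by blast
  then show ?thesis
    using that[of "(a + min b c) / 2"] assms(2) by simp
qed

lemma log_derivative_factor_nonpos_if_blowup:
  fixes u u' z z' w :: "real \<Rightarrow> real"
  assumes lim: "filterlim u at_top (at_right a)"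
    and u': "\<And>x. x \<in> {a<..<c} \<Longrightarrow> (u has_real_derivative u' x) (at x)"
    and z': "\<And>x. x \<in> {a<..<c} \<Longrightarrow> (z has_real_derivative z' x) (at x)"
    and u_pos: "\<And>x. x \<in> {a<..<c} \<Longrightarrow> u x > 0"
    and w_nonneg: "\<And>x. x \<in> {a<..<c} \<Longrightarrow> w x \<ge> 0"
    and u'_eq: "\<And>x. x \<in> {a<..<c} \<Longrightarrow> u' x = z x * w x * u x"
    and z'_nonpos: "\<And>x. x \<in> {a<..<c} \<Longrightarrow> z' x \<le> 0"
    and r: "r \<in> {a<..<c}"
  shows "z r \<le> 0"
proof (rule ccontr)
  assume "\<not> z r \<le> 0"
  have "u x \<le> u r" if "a < x" "x \<le> r" for x
  proof (rule DERIV_nonneg_imp_le[OF \<open>x \<le> r\<close>])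
    fix y assume y: "y \<in> {x<..<r}"
    have "- z y \<le> - z r"
      by (rule DERIV_nonneg_imp_le[of y r _ "\<lambda>x. - z' x"])
         (use y that r z' z'_nonpos in \<open>auto intro!: DERIV_minus\<close>)
    then have "z y \<ge> 0" using \<open>\<not> z r \<le> 0\<close> by linarith
    moreover have "y \<in> {a<..<c}" using y that r by auto
    ultimately show "u' y \<ge> 0"
      using u'_eq u_pos w_nonneg by (simp add: less_imp_le)
  qed (use that r u' in auto)
  moreover obtain s where "a < s" "s < r" "u r < u s"
    using filterlim_at_top_at_right_obtain[OF lim] r by auto
  ultimately show False by force
qed

lemma no_blowup_at_left_end:
  fixes u u' z z' w :: "real \<Rightarrow> real" and \<eta> :: real
  assumes "a < c" "\<eta> > 0"
    and u': "\<And>x. x \<in> {a<..<c} \<Longrightarrow> (u has_real_derivative u' x) (at x)"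
    and z': "\<And>x. x \<in> {a<..<c} \<Longrightarrow> (z has_real_derivative z' x) (at x)"
    and u_pos: "\<And>x. x \<in> {a<..<c} \<Longrightarrow> u x > 0"
    and w_nonneg: "\<And>x. x \<in> {a<..<c} \<Longrightarrow> w x \<ge> 0"
    and u'_eq: "\<And>x. x \<in> {a<..<c} \<Longrightarrow> u' x = z x * w x * u x"
    and z'_le: "\<And>x. x \<in> {a<..<c} \<Longrightarrow> z' x \<le> - \<eta> * w x"
  shows "\<not> filterlim u at_top (at_right a)"
proof
  assume lim: "filterlim u at_top (at_right a)"
  have z_nonpos: "z x \<le> 0" if "x \<in> {a<..<c}" for x
  proof (rule log_derivative_factor_nonpos_if_blowup[OF lim u' z' u_pos w_nonneg u'_eq _ that])
    fix y assume "y \<in> {a<..<c}"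
    then have "0 \<le> \<eta> * w y" "z' y \<le> - \<eta> * w y"
      using w_nonneg z'_le \<open>\<eta> > 0\<close> by simp_all
    then show "z' y \<le> 0" by linarith
  qed
  define \<Phi> where "\<Phi> x = (z x)^2 + 2 * \<eta> * ln (u x)" for x
  define r where "r = (a + c) / 2"
  have r: "a < r" "r < c" using \<open>a < c\<close> by (simp_all add: r_def)
  have "u x \<le> exp (\<Phi> r / (2 * \<eta>))" if "a < x" "x \<le> r" for x
  proof -
    have "\<Phi> x \<le> \<Phi> r"
    proof (rule DERIV_nonneg_imp_le[OF \<open>x \<le> r\<close>])
      fix y assume "y \<in> {x..r}"
      then have y: "y \<in> {a<..<c}" using that r by auto
      show "(\<Phi> has_real_derivative 2 * z y * (z' y + \<eta> * w y)) (at y)"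
        unfolding \<Phi>_def
        by (rule derivative_eq_intros z'[OF y] u'[OF y] | use u_pos[OF y] u'_eq[OF y] in simp)+
           (simp add: algebra_simps)
    next
      fix y assume "y \<in> {x<..<r}"
      then have y: "y \<in> {a<..<c}" using that r by auto
      show "2 * z y * (z' y + \<eta> * w y) \<ge> 0"
        using z_nonpos[OF y] z'_le[OF y] by (simp add: mult_nonpos_nonpos)
    qed
    then have "2 * \<eta> * ln (u x) \<le> \<Phi> r"
      unfolding \<Phi>_def using zero_le_power2[of "z x"] by linarith
    then have "ln (u x) \<le> \<Phi> r / (2 * \<eta>)"
      using \<open>\<eta> > 0\<close> by (simp add: field_simps)
    moreover have "u x > 0" using u_pos that r by simp
    ultimately show ?thesis by (metis exp_le_cancel_iff exp_ln)
  qed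
  moreover obtain x where "a < x" "x < r" "exp (\<Phi> r / (2 * \<eta>)) < u x"
    using filterlim_at_top_at_right_obtain[OF lim r(1)] by blast
  ultimately show False by force
qed

lemma E_scaled_gradient_identity:
  fixes p M k U U' U'' :: real
  assumes "p > 1" "U > 0"
    and E: "- U'' - k * U' = \<bar>U\<bar> powr (p - 1) * U + M * \<bar>U'\<bar> powr (2 * p / (p + 1))"
  defines "Z \<equiv> U' * U powr (- ((p + 1) / 2))"
  shows "U'' * U powr (- ((p + 1) / 2)) - (p + 1) / 2 * U powr (- ((p + 1) / 2) - 1) * U' * U'
    = U powr ((p - 1) / 2) * (- 1 - M * \<bar>Z\<bar> powr (2 * p / (p + 1)) - (p + 1) / 2 * Z^2) - k * Z"
proof -
  define \<beta> where "\<beta> = (p + 1) / 2"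
  define \<gamma> where "\<gamma> = (p - 1) / 2"
  define q where "q = 2 * p / (p + 1)"
  note Z_def = Z_def[folded \<beta>_def]
  have source: "U powr (p - 1) * U * U powr (- \<beta>) = U powr \<gamma>"
  proof -
    have "\<gamma> = (p - 1) + 1 + (- \<beta>)" by (simp add: \<beta>_def \<gamma>_def field_simps)
    then show ?thesis using \<open>U > 0\<close> by (simp only: powr_add) simp
  qed
  have gradient: "\<bar>U'\<bar> powr q * U powr (- \<beta>) = \<bar>Z\<bar> powr q * U powr \<gamma>"
  proof -
    have "- \<beta> = - \<beta> * q + \<gamma>"
      using \<open>p > 1\<close> by (simp add: \<beta>_def \<gamma>_def q_def field_simps)
    then have "U powr (- \<beta>) = (U powr (- \<beta>)) powr q * U powr \<gamma>"
      by (metis powr_add powr_powr)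
    then show ?thesis by (simp add: Z_def abs_mult powr_mult)
  qed
  have square: "U powr (- \<beta> - 1) * U' * U' = Z^2 * U powr \<gamma>"
  proof -
    have "- \<beta> - 1 = - \<beta> + - \<beta> + \<gamma>" by (simp add: \<beta>_def \<gamma>_def field_simps)
    then have "U powr (- \<beta> - 1) = U powr (- \<beta>) * U powr (- \<beta>) * U powr \<gamma>"
      by (metis powr_add)
    then show ?thesis by (simp add: Z_def power2_eq_square)
  qed
  have ode: "U'' = - k * U' - U powr (p - 1) * U - M * \<bar>U'\<bar> powr q"
    using E \<open>U > 0\<close> by (simp add: q_def)
  have "U'' * U powr (- \<beta>) = - k * Z - U powr (p - 1) * U * U powr (- \<beta>)
      - M * (\<bar>U'\<bar> powr q * U powr (- \<beta>))"
    unfolding ode by (simp add: Z_def algebra_simps)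
  then show ?thesis
    unfolding \<beta>_def[symmetric] source gradient mult.assoc[of \<beta>] square
    by (simp add: \<gamma>_def q_def algebra_simps)
qed

lemma solves_E_on_scaled_gradient:
  fixes N :: nat and p M a b :: real and u :: "real \<Rightarrow> real"
  assumes "solves_E_on N p M u a b" "p > 1" and pos: "\<And>r. r \<in> {a<..<b} \<Longrightarrow> u r > 0"
  obtains u' z z' where
    "\<And>r. r \<in> {a<..<b} \<Longrightarrow> (u has_real_derivative u' r) (at r)"
    "\<And>r. r \<in> {a<..<b} \<Longrightarrow> (z has_real_derivative z' r) (at r)"
    "\<And>r. r \<in> {a<..<b} \<Longrightarrow> u' r = z r * u r powr ((p - 1) / 2) * u r"
    "\<And>r. r \<in> {a<..<b} \<Longrightarrow> z' r = u r powr ((p - 1) / 2)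
        * (- 1 - M * \<bar>z r\<bar> powr (2 * p / (p + 1)) - (p + 1) / 2 * (z r)^2) - (real N - 1) / r * z r"
proof -
  obtain u' u'' where D: "\<And>r. r \<in> {a<..<b} \<Longrightarrow>
        (u has_real_derivative u' r) (at r) \<and> (u' has_real_derivative u'' r) (at r) \<and>
        - u'' r - (real N - 1) / r * u' r
          = \<bar>u r\<bar> powr (p - 1) * u r + M * \<bar>u' r\<bar> powr (2 * p / (p + 1))"
    using assms(1) unfolding solves_E_on_def by blast
  define z where "z r = u' r * u r powr (- ((p + 1) / 2))" for r
  define z' where "z' r = u'' r * u r powr (- ((p + 1) / 2))
      - (p + 1) / 2 * u r powr (- ((p + 1) / 2) - 1) * u' r * u' r" for r
  show ?thesis
  proof (rule that[of u' z z'])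
    fix r assume r: "r \<in> {a<..<b}"
    then show u': "(u has_real_derivative u' r) (at r)" using D by blast
    have u'': "(u' has_real_derivative u'' r) (at r)"
      and E: "- u'' r - (real N - 1) / r * u' r
          = \<bar>u r\<bar> powr (p - 1) * u r + M * \<bar>u' r\<bar> powr (2 * p / (p + 1))"
      using D[OF r] by blast+
    show "(z has_real_derivative z' r) (at r)"
      unfolding z_def z'_def
      by (rule DERIV_mult[OF u'' DERIV_fun_powr[OF u' pos[OF r]], THEN DERIV_cong])
         (simp add: algebra_simps)
    have "u r powr (- ((p + 1) / 2)) * u r powr ((p - 1) / 2) * u r = u r powr (-1 + 1)"
      using pos[OF r] by (simp only: powr_add[symmetric]) (simp add: field_simps)
    then show "u' r = z r * u r powr ((p - 1) / 2) * u r"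
      using pos[OF r] by (simp add: z_def mult.assoc)
    show "z' r = u r powr ((p - 1) / 2) * (- 1 - M * \<bar>z r\<bar> powr (2 * p / (p + 1))
        - (p + 1) / 2 * (z r)^2) - (real N - 1) / r * z r"
      using E_scaled_gradient_identity[OF \<open>p > 1\<close> pos[OF r] E] by (simp add: z_def z'_def)
  qed
qed

theorem proposition4p8:
  fixes N :: nat and p M a b :: real
  assumes "N \<ge> 2" and "p > 1" and "M > - mu_star1 p"
    and "0 < a" and "a < b"
  shows "\<not> (\<exists>u. solves_E_on N p M u a b \<and> (\<forall>r\<in>{a<..<b}. u r > 0)
               \<and> filterlim u at_top (at_right a))"
proof
  assume "\<exists>u. solves_E_on N p M u a b \<and> (\<forall>r\<in>{a<..<b}. u r > 0)
               \<and> filterlim u at_top (at_right a)"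
  then obtain u where sol: "solves_E_on N p M u a b" and pos: "\<forall>r\<in>{a<..<b}. u r > 0"
    and lim: "filterlim u at_top (at_right a)" by blast
  define w where "w r = u r powr ((p - 1) / 2)" for r
  obtain u' z z' where u': "\<And>r. r \<in> {a<..<b} \<Longrightarrow> (u has_real_derivative u' r) (at r)"
    and z': "\<And>r. r \<in> {a<..<b} \<Longrightarrow> (z has_real_derivative z' r) (at r)"
    and u'_eq: "\<And>r. r \<in> {a<..<b} \<Longrightarrow> u' r = z r * w r * u r"
    and z'_eq: "\<And>r. r \<in> {a<..<b} \<Longrightarrow> z' r = w r
        * (- 1 - M * \<bar>z r\<bar> powr (2 * p / (p + 1)) - (p + 1) / 2 * (z r)^2) - (real N - 1) / r * z r"
    using solves_E_on_scaled_gradient[OF sol \<open>p > 1\<close>] pos unfolding w_def by blast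
  obtain \<eta> K where "\<eta> > 0" and riccati: "\<And>r w z. a < r \<Longrightarrow> K \<le> w \<Longrightarrow>
      w * (- 1 - M * \<bar>z\<bar> powr (2 * p / (p + 1)) - (p + 1) / 2 * z^2) - (real N - 1) / r * z
        \<le> - \<eta> * w"
    using E_riccati_rhs_le[of N p M a] assms by auto
  have "filterlim w at_top (at_right a)"
    unfolding w_def using filterlim_compose[OF real_powr_at_top lim] \<open>p > 1\<close> by simp
  then have "eventually (\<lambda>r. K \<le> w r \<and> r < b) (at_right a)"
    using eventually_at_rightI[OF _ \<open>a < b\<close>, of "\<lambda>r. r < b"]
    by (auto simp: filterlim_at_top intro: eventually_conj)
  then obtain c where "a < c" and c: "\<And>r. a < r \<Longrightarrow> r < c \<Longrightarrow> K \<le> w r \<and> r < b"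
    unfolding eventually_at_right_field by blast
  have "\<not> filterlim u at_top (at_right a)"
  proof (rule no_blowup_at_left_end[OF \<open>a < c\<close> \<open>\<eta> > 0\<close>, of u u' z z' w])
    fix r assume "r \<in> {a<..<c}"
    then have "r \<in> {a<..<b}" "a < r" "K \<le> w r" using c by auto
    then show "(u has_real_derivative u' r) (at r)" "(z has_real_derivative z' r) (at r)"
      "u r > 0" "w r \<ge> 0" "u' r = z r * w r * u r" "z' r \<le> - \<eta> * w r"
      using u' z' pos u'_eq z'_eq riccati by (simp_all add: w_def)
  qed
  with lim show False by blast
qed

end
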